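(* Consider two loci with $K$ alleles at locus A and $L$ at locus B, haplotype frequency path $\{X(t)=(X_{ij}(t)):t\in[0,T]\}$ in the simplex $\Delta_{KL-1}$ with marginals $X_{i\cdot}=\sum_l X_{il}$, $X_{\cdot j}=\sum_k X_{kj}$, and let $I_T=\int_0^T\sum_{i,j}\frac{(X_{ij}(t)-X_{i\cdot}(t)X_{\cdot j}(t))^2}{X_{ij}(t)}dt$ be finite and positive. For a known drift component $c$, define the recombination estimator $\hat\rho[c]=I_T^{-1}\int_0^T\sum_{i=1}^K\sum_{j=1}^L\frac{X_{i\cdot}(t)X_{\cdot j}(t)}{X_{ij}(t)}\,d\widetilde X^{c}_{ij}(t)$ with $\widetilde X^c_{ij}(t)=X_{ij}(t)-\int_0^tc_{ij}(X(s))ds$. Let $c^{\mathrm{mut}}_{ij}(x)=\frac{\theta_A}{2}\sum_{k}x_{kj}(P^A_{ki}-\delta_{ik})+\frac{\theta_B}{2}\sum_l x_{il}(P^B_{lj}-\delta_{jl})$ and $$c^{\mathrm{sel}}_{ij}(x)=c^{\mathrm{mut}}_{ij}(x)+\frac{x_{ij}}{2}\sum_{k=1}^K\sum_{l=1}^L\Big(s_{ij,kl}x_{kl}-\sum_{m=1}^K\sum_{n=1}^L s_{kl,mn}x_{kl}x_{mn}\Big).$$ If selection is non-epistatic, i.e. $s_{ij,kl}=s^A_{ik}+s^B_{jl}$ for some constants $s^A_{ik},s^B_{jl}$, then $\hat\rho[c^{\mathrm{sel}}]=\hat\rho[c^{\mathrm{mut}}]$.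
   Context: This is the model of a two-locus Wright--Fisher diffusion with recombination drift $\rho(x_{i\cdot}x_{\cdot j}-x_{ij})$, mutation at rates $\theta_A/2,\theta_B/2$ with stochastic transition matrices $P^A,P^B$, and diploid epistatic selection in which an individual carrying haplotypes $(i,j)$ and $(k,l)$ has selective parameter $s_{ij,kl}$; $\hat\rho[c]$ is the maximum-likelihood recombination estimator computed when the known part of the drift is taken to be $c$. *)

theory Defs
  imports "HOL-Analysis.Analysis"
begin

text \<open>Haplotype frequencies: x i j for i < K (locus A), j < L (locus B).\<close>

definition margA :: "nat \<Rightarrow> (nat \<Rightarrow> nat \<Rightarrow> real) \<Rightarrow> nat \<Rightarrow> real" where
  "margA L x i = (\<Sum>l<L. x i l)"

definition margB :: "nat \<Rightarrow> (nat \<Rightarrow> nat \<Rightarrow> real) \<Rightarrow> nat \<Rightarrow> real" where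
  "margB K x j = (\<Sum>k<K. x k j)"

definition in_simplex :: "nat \<Rightarrow> nat \<Rightarrow> (nat \<Rightarrow> nat \<Rightarrow> real) \<Rightarrow> bool" where
  "in_simplex K L x \<longleftrightarrow> (\<forall>i<K. \<forall>j<L. 0 \<le> x i j) \<and> (\<Sum>i<K. \<Sum>j<L. x i j) = 1"

definition stochastic_matrix :: "nat \<Rightarrow> (nat \<Rightarrow> nat \<Rightarrow> real) \<Rightarrow> bool" where
  "stochastic_matrix n P \<longleftrightarrow> (\<forall>i<n. \<forall>j<n. 0 \<le> P i j) \<and> (\<forall>i<n. (\<Sum>j<n. P i j) = 1)"

definition I_T :: "nat \<Rightarrow> nat \<Rightarrow> real \<Rightarrow> (real \<Rightarrow> nat \<Rightarrow> nat \<Rightarrow> real) \<Rightarrow> real" where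
  "I_T K L T X = integral {0..T} (\<lambda>t. \<Sum>i<K. \<Sum>j<L.
      (X t i j - margA L (X t) i * margB K (X t) j)\<^sup>2 / X t i j)"

text \<open>The stochastic integral
  J = \<integral>_0^T \<Sum>_ij X_i.X_.j/X_ij dX_ij is taken as a given real number; the integral
  against X~^c = X - \<integral> c(X) ds then splits as J minus the Lebesgue-Stieltjes (dt) part.\<close>
definition rho_hat :: "nat \<Rightarrow> nat \<Rightarrow> real \<Rightarrow> (real \<Rightarrow> nat \<Rightarrow> nat \<Rightarrow> real) \<Rightarrow> real
    \<Rightarrow> ((nat \<Rightarrow> nat \<Rightarrow> real) \<Rightarrow> nat \<Rightarrow> nat \<Rightarrow> real) \<Rightarrow> real" where
  "rho_hat K L T X J c = (J - integral {0..T} (\<lambda>t. \<Sum>i<K. \<Sum>j<L.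
      margA L (X t) i * margB K (X t) j / X t i j * c (X t) i j)) / I_T K L T X"

definition c_mut :: "nat \<Rightarrow> nat \<Rightarrow> real \<Rightarrow> real \<Rightarrow> (nat \<Rightarrow> nat \<Rightarrow> real) \<Rightarrow> (nat \<Rightarrow> nat \<Rightarrow> real)
    \<Rightarrow> (nat \<Rightarrow> nat \<Rightarrow> real) \<Rightarrow> nat \<Rightarrow> nat \<Rightarrow> real" where
  "c_mut K L thA thB PA PB x i j =
     thA / 2 * (\<Sum>k<K. x k j * (PA k i - (if i = k then 1 else 0)))
   + thB / 2 * (\<Sum>l<L. x i l * (PB l j - (if j = l then 1 else 0)))"

definition c_sel :: "nat \<Rightarrow> nat \<Rightarrow> real \<Rightarrow> real \<Rightarrow> (nat \<Rightarrow> nat \<Rightarrow> real) \<Rightarrow> (nat \<Rightarrow> nat \<Rightarrow> real)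
    \<Rightarrow> (nat \<Rightarrow> nat \<Rightarrow> nat \<Rightarrow> nat \<Rightarrow> real)
    \<Rightarrow> (nat \<Rightarrow> nat \<Rightarrow> real) \<Rightarrow> nat \<Rightarrow> nat \<Rightarrow> real" where
  "c_sel K L thA thB PA PB s x i j =
     c_mut K L thA thB PA PB x i j
   + x i j / 2 * (\<Sum>k<K. \<Sum>l<L. (s i j k l * x k l
        - (\<Sum>m<K. \<Sum>n<L. s k l m n * x k l * x m n)))"

end

theory Submission
  imports Defs
begin

text \<open>Selection adds \<open>x\<^sub>i\<^sub>j (F\<^sub>i\<^sub>j - W) / 2\<close> to the drift, where \<open>F\<^sub>i\<^sub>j\<close> is the fitness of
  haplotype \<open>ij\<close> and \<open>W\<close> the mean fitness. After weighting with \<open>x\<^sub>i\<^sub>. x\<^sub>.\<^sub>j / x\<^sub>i\<^sub>j\<close> and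
  summing, this contributes the mean fitness under the product of the marginals minus the
  mean fitness under \<open>x\<close>. Without epistasis \<open>F\<^sub>i\<^sub>j = a\<^sub>i + b\<^sub>j\<close> is additive, and the mean
  of an additive function depends on the marginals only, so the contribution vanishes.\<close>

definition hap_fitness :: "nat \<Rightarrow> nat \<Rightarrow> (nat \<Rightarrow> nat \<Rightarrow> nat \<Rightarrow> nat \<Rightarrow> real)
    \<Rightarrow> (nat \<Rightarrow> nat \<Rightarrow> real) \<Rightarrow> nat \<Rightarrow> nat \<Rightarrow> real" where
  "hap_fitness K L s x i j = (\<Sum>k<K. \<Sum>l<L. s i j k l * x k l)"

definition mean_fitness :: "nat \<Rightarrow> nat \<Rightarrow> (nat \<Rightarrow> nat \<Rightarrow> nat \<Rightarrow> nat \<Rightarrow> real)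
    \<Rightarrow> (nat \<Rightarrow> nat \<Rightarrow> real) \<Rightarrow> real" where
  "mean_fitness K L s x = (\<Sum>i<K. \<Sum>j<L. x i j * hap_fitness K L s x i j)"

lemma c_sel_eq_c_mut_plus_selection:
  "c_sel K L thA thB PA PB s x i j
     = c_mut K L thA thB PA PB x i j + x i j / 2 * (hap_fitness K L s x i j - mean_fitness K L s x)"
  by (simp add: c_sel_def hap_fitness_def mean_fitness_def sum_subtractf sum_distrib_left
      mult.commute mult.left_commute)

lemma sum_margA: "(\<Sum>i<K. margA L x i) = (\<Sum>i<K. \<Sum>j<L. x i j)"
  by (simp add: margA_def)

lemma sum_margB: "(\<Sum>j<L. margB K x j) = (\<Sum>i<K. \<Sum>j<L. x i j)"
  by (simp add: margB_def sum.swap[of _ "{..<L}"])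

lemma sum_additive_eq_marginals:
  "(\<Sum>i<K. \<Sum>j<L. x i j * (a i + b j))
     = (\<Sum>i<K. margA L x i * a i) + (\<Sum>j<L. margB K x j * b j)"
  by (simp add: distrib_left sum.distrib margA_def margB_def sum_distrib_right
      sum.swap[of _ "{..<L}"])

lemma sum_additive_product_marginals:
  assumes "(\<Sum>i<K. \<Sum>j<L. x i j) = 1"
  shows "(\<Sum>i<K. \<Sum>j<L. margA L x i * margB K x j * (a i + b j))
     = (\<Sum>i<K. \<Sum>j<L. x i j * (a i + b j))"
proof -
  have "(\<Sum>i<K. \<Sum>j<L. margA L x i * margB K x j * (a i + b j))
      = (\<Sum>i<K. margA L x i * a i) * (\<Sum>j<L. margB K x j)
        + (\<Sum>i<K. margA L x i) * (\<Sum>j<L. margB K x j * b j)"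
    by (simp add: distrib_left sum.distrib sum_distrib_left sum_distrib_right mult_ac)
      (rule sum.swap)
  also have "\<dots> = (\<Sum>i<K. \<Sum>j<L. x i j * (a i + b j))"
    using assms by (simp add: sum_margA sum_margB sum_additive_eq_marginals)
  finally show ?thesis .
qed

lemma hap_fitness_additive:
  assumes "\<forall>i<K. \<forall>j<L. \<forall>k<K. \<forall>l<L. s i j k l = sA i k + sB j l" "i < K" "j < L"
  shows "hap_fitness K L s x i j
    = (\<Sum>k<K. sA i k * margA L x k) + (\<Sum>l<L. sB j l * margB K x l)"
proof -
  have "hap_fitness K L s x i j = (\<Sum>k<K. \<Sum>l<L. x k l * (sA i k + sB j l))"
    unfolding hap_fitness_def using assms by (intro sum.cong refl) simp
  then show ?thesis
    by (simp add: sum_additive_eq_marginals mult.commute)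
qed

lemma selection_term_vanishes:
  assumes total: "(\<Sum>i<K. \<Sum>j<L. x i j) = 1"
    and additive: "\<forall>i<K. \<forall>j<L. \<forall>k<K. \<forall>l<L. s i j k l = sA i k + sB j l"
  shows "(\<Sum>i<K. \<Sum>j<L. margA L x i * margB K x j
            * (hap_fitness K L s x i j - mean_fitness K L s x)) = 0"
proof -
  define a where "a i = (\<Sum>k<K. sA i k * margA L x k)" for i
  define b where "b j = (\<Sum>l<L. sB j l * margB K x l)" for j
  have F: "hap_fitness K L s x i j = a i + b j" if "i < K" "j < L" for i j
    using hap_fitness_additive[OF additive that] by (simp add: a_def b_def)
  have W: "mean_fitness K L s x = (\<Sum>i<K. \<Sum>j<L. x i j * (a i + b j))"
    unfolding mean_fitness_def by (intro sum.cong refl) (simp add: F)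
  have "(\<Sum>i<K. \<Sum>j<L. margA L x i * margB K x j) = 1"
    using total by (simp add: sum_distrib_left[symmetric] sum_distrib_right[symmetric]
        sum_margA sum_margB)
  then have "(\<Sum>i<K. \<Sum>j<L. margA L x i * margB K x j
            * (hap_fitness K L s x i j - mean_fitness K L s x))
      = (\<Sum>i<K. \<Sum>j<L. margA L x i * margB K x j * (a i + b j)) - mean_fitness K L s x"
    by (simp add: F right_diff_distrib sum_subtractf sum_distrib_right[symmetric])
  also have "\<dots> = 0"
    using W sum_additive_product_marginals[OF total] by simp
  finally show ?thesis .
qed

lemma estimator_integrand_c_sel_eq_c_mut:
  assumes "(\<Sum>i<K. \<Sum>j<L. x i j) = 1"
    and nonzero: "\<forall>i<K. \<forall>j<L. x i j \<noteq> 0"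
    and "\<forall>i<K. \<forall>j<L. \<forall>k<K. \<forall>l<L. s i j k l = sA i k + sB j l"
  shows "(\<Sum>i<K. \<Sum>j<L. margA L x i * margB K x j / x i j * c_sel K L thA thB PA PB s x i j)
       = (\<Sum>i<K. \<Sum>j<L. margA L x i * margB K x j / x i j * c_mut K L thA thB PA PB x i j)"
proof -
  have "(\<Sum>i<K. \<Sum>j<L. margA L x i * margB K x j / x i j * c_sel K L thA thB PA PB s x i j)
     = (\<Sum>i<K. \<Sum>j<L. margA L x i * margB K x j / x i j * c_mut K L thA thB PA PB x i j
          + margA L x i * margB K x j * (hap_fitness K L s x i j - mean_fitness K L s x) / 2)"
    using nonzero by (intro sum.cong refl)
      (simp add: c_sel_eq_c_mut_plus_selection field_simps)
  also have "\<dots> = (\<Sum>i<K. \<Sum>j<L. margA L x i * margB K x j / x i j * c_mut K L thA thB PA PB x i j)"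
    using selection_term_vanishes[OF assms(1,3)]
    by (simp add: sum.distrib sum_divide_distrib[symmetric])
  finally show ?thesis .
qed

theorem mainTheorem7:
  fixes K L :: nat and T thA thB J :: real
    and X :: "real \<Rightarrow> nat \<Rightarrow> nat \<Rightarrow> real"
    and PA PB :: "nat \<Rightarrow> nat \<Rightarrow> real"
    and s :: "nat \<Rightarrow> nat \<Rightarrow> nat \<Rightarrow> nat \<Rightarrow> real"
    and sA sB :: "nat \<Rightarrow> nat \<Rightarrow> real"
  assumes "0 < T"
    and "\<forall>t\<in>{0..T}. in_simplex K L (X t)"
    and "\<forall>t\<in>{0..T}. \<forall>i<K. \<forall>j<L. 0 < X t i j"
    and "stochastic_matrix K PA" and "stochastic_matrix L PB"
    and "(\<lambda>t. \<Sum>i<K. \<Sum>j<L. (X t i j - margA L (X t) i * margB K (X t) j)\<^sup>2 / X t i j)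
           integrable_on {0..T}"
    and "0 < I_T K L T X"
    and "\<forall>i<K. \<forall>j<L. \<forall>k<K. \<forall>l<L. s i j k l = sA i k + sB j l"
  shows "rho_hat K L T X J (c_sel K L thA thB PA PB s) = rho_hat K L T X J (c_mut K L thA thB PA PB)"
proof -
  have "(\<Sum>i<K. \<Sum>j<L. margA L (X t) i * margB K (X t) j / X t i j * c_sel K L thA thB PA PB s (X t) i j)
      = (\<Sum>i<K. \<Sum>j<L. margA L (X t) i * margB K (X t) j / X t i j * c_mut K L thA thB PA PB (X t) i j)"
    if "t \<in> {0..T}" for t
  proof (rule estimator_integrand_c_sel_eq_c_mut[OF _ _ assms(8)])
    show "(\<Sum>i<K. \<Sum>j<L. X t i j) = 1"
      using assms(2) that by (simp add: in_simplex_def)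
    show "\<forall>i<K. \<forall>j<L. X t i j \<noteq> 0"
      using assms(3) that by (metis less_irrefl)
  qed
  then have "integral {0..T} (\<lambda>t. \<Sum>i<K. \<Sum>j<L.
        margA L (X t) i * margB K (X t) j / X t i j * c_sel K L thA thB PA PB s (X t) i j)
      = integral {0..T} (\<lambda>t. \<Sum>i<K. \<Sum>j<L.
        margA L (X t) i * margB K (X t) j / X t i j * c_mut K L thA thB PA PB (X t) i j)"
    by (rule integral_cong)
  then show ?thesis
    unfolding rho_hat_def by simp
qed

end
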